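(* Take $\Omega=(0,\infty)$. The gamma function is a germinating function: for every $\delta>0$ there exists a Lebesgue measurable set $S\subseteq(0,\infty)$ with Lebesgue measure $\lambda(S)<\delta$ that is a fundamental set for $\Gamma$, i.e. $\mathrm{Cl}_\Omega(S)=(0,\infty)$.
   Context: Let $\Omega$ be either $(0,\infty)$ or $D=\mathbb{C}\setminus\{0,-1,-2,\dots\}$. An admissible instance (relative to $\Omega$) is one of the following finite lists of points, all entries of which are required to lie in $\Omega$: (i) $(z+1,\,z)$ for $z\in\Omega$ with $z+1\in\Omega$ (corresponding to the identity $\Gamma(z+1)=z\Gamma(z)$); (ii) $(z,\,1-z)$ for $z\in\Omega\setminus\mathbb{Z}$ with $1-z\in\Omega$ (corresponding to $\Gamma(z)\Gamma(1-z)=\pi/\sin(\pi z)$); (iii) for an integer $n\ge 2$, $\big(z,\,\tfrac{z}{n},\,\tfrac{z+1}{n},\dots,\tfrac{z+n-1}{n}\big)$ (corresponding to Gauss's multiplication formula $(2\pi)^{(n-1)/2}n^{1/2-z}\Gamma(z)=\prod_{j=0}^{n-1}\Gamma(\tfrac{z+j}{n})$). For $B\subseteq\Omega$, a point $p\in\Omega$ is obtained from $B$ in one step if there is an admissible instance in which $p$ occurs exactly once as an entry and every other entry lies in $B$. Set $B_0=B$, $B_{i+1}=B_i\cup\{p: p \text{ obtained from } B_i \text{ in one step}\}$, and $\mathrm{Cl}_\Omega(B)=\bigcup_{i\ge0}B_i$ (the set of points at which the value of $\Gamma$ is determined by its values on $B$ via finitely many applications of the identities). For $A,B\subseteq\Omega$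 write $A\preceq B$ if $A\subseteq \mathrm{Cl}_\Omega(B)$. A set $S\subseteq\Omega$ is a fundamental set (for $\Gamma$ on $\Omega$) if $\mathrm{Cl}_\Omega(S)=\Omega$. *)

theory Defs
  imports "HOL-Analysis.Analysis"
begin

text \<open>Admissible instances relative to a domain Omega (real case): finite lists of
points, all entries in Omega, coming from the three Gamma identities.\<close>

definition admissible :: "real set \<Rightarrow> real list set" where
  "admissible \<Omega> =
     {L. set L \<subseteq> \<Omega> \<and>
        ((\<exists>z. L = [z + 1, z]) \<or>
         (\<exists>z. z \<notin> \<int> \<and> L = [z, 1 - z]) \<or>
         (\<exists>z (n::nat). n \<ge> 2 \<and> L = z # map (\<lambda>j. (z + real j) / real n) [0..<n]))}"

definition one_step :: "real set \<Rightarrow> real set \<Rightarrow> real set" where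
  "one_step \<Omega> B = {p \<in> \<Omega>. \<exists>L \<in> admissible \<Omega>. count_list L p = 1 \<and>
                       (\<forall>q \<in> set L. q \<noteq> p \<longrightarrow> q \<in> B)}"

fun closure_seq :: "real set \<Rightarrow> real set \<Rightarrow> nat \<Rightarrow> real set" where
  "closure_seq \<Omega> B 0 = B"
| "closure_seq \<Omega> B (Suc i) = closure_seq \<Omega> B i \<union> one_step \<Omega> (closure_seq \<Omega> B i)"

definition gamma_Cl :: "real set \<Rightarrow> real set \<Rightarrow> real set" where
  "gamma_Cl \<Omega> B = (\<Union>i. closure_seq \<Omega> B i)"

definition fundamental_set :: "real set \<Rightarrow> real set \<Rightarrow> bool" where
  "fundamental_set \<Omega> S \<longleftrightarrow> S \<subseteq> \<Omega> \<and> gamma_Cl \<Omega> S = \<Omega>"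

end

theory Submission
  imports Defs
begin

text \<open>Fix \<open>Q\<close> and \<open>N = Q!\<close>, and let \<open>S\<close> be the set of \<open>u \<in> (0,1]\<close> lying within
\<open>1/(QN)\<close> of a multiple of \<open>1/N\<close>; its measure is at most \<open>4/Q\<close>. For \<open>x \<in> (0,1]\<close>,
Dirichlet's theorem gives \<open>q \<le> Q\<close> with \<open>qx\<close> within \<open>1/Q\<close> of an integer. Since \<open>q\<close>
divides \<open>N\<close>, put \<open>n = N/q\<close>: then \<open>N(x+j)/n = qx + qj\<close>, so every \<open>(x+j)/n\<close> with
\<open>j < n\<close> lies in \<open>S\<close>, and Gauss's multiplication formula of order \<open>n\<close> recovers
\<open>\<Gamma>(x)\<close>. The recurrence \<open>\<Gamma>(x+1) = x\<Gamma>(x)\<close> then reaches all of \<open>(0,\<infinity>)\<close>.\<close>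

lemma closure_seq_mono: "i \<le> j \<Longrightarrow> closure_seq \<Omega> B i \<subseteq> closure_seq \<Omega> B j"
  by (induction j rule: dec_induct) auto

lemma closure_seq_subset: "B \<subseteq> \<Omega> \<Longrightarrow> closure_seq \<Omega> B i \<subseteq> \<Omega>"
  by (induction i) (auto simp: one_step_def)

lemma subset_gamma_Cl: "B \<subseteq> gamma_Cl \<Omega> B"
  unfolding gamma_Cl_def using closure_seq.simps(1) by blast

lemma gamma_Cl_subset: "B \<subseteq> \<Omega> \<Longrightarrow> gamma_Cl \<Omega> B \<subseteq> \<Omega>"
  unfolding gamma_Cl_def using closure_seq_subset by blast

lemma finite_subset_closure_seq:
  assumes "finite F" "F \<subseteq> gamma_Cl \<Omega> B"
  shows "\<exists>i. F \<subseteq> closure_seq \<Omega> B i"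
  using assms
proof (induction F rule: finite_induct)
  case empty
  show ?case by blast
next
  case (insert p F)
  then obtain i j where "F \<subseteq> closure_seq \<Omega> B i" "p \<in> closure_seq \<Omega> B j"
    unfolding gamma_Cl_def by blast
  then have "insert p F \<subseteq> closure_seq \<Omega> B (max i j)"
    using closure_seq_mono[of i "max i j" \<Omega> B] closure_seq_mono[of j "max i j" \<Omega> B] by auto
  then show ?case ..
qed

lemma gamma_Cl_one_step:
  assumes "L \<in> admissible \<Omega>" "count_list L p = 1"
    and "\<And>q. q \<in> set L \<Longrightarrow> q \<noteq> p \<Longrightarrow> q \<in> gamma_Cl \<Omega> B"
  shows "p \<in> gamma_Cl \<Omega> B"
proof -
  have "p \<in> \<Omega>"
    using assms(1,2) count_notin[of p L] unfolding admissible_def by fastforce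
  obtain i where "set L - {p} \<subseteq> closure_seq \<Omega> B i"
    using finite_subset_closure_seq[of "set L - {p}"] assms(3) by blast
  then have "p \<in> one_step \<Omega> (closure_seq \<Omega> B i)"
    unfolding one_step_def using assms(1,2) \<open>p \<in> \<Omega>\<close> by blast
  then have "p \<in> closure_seq \<Omega> B (Suc i)"
    by simp
  then show ?thesis
    unfolding gamma_Cl_def by blast
qed

lemma gamma_Cl_recurrence:
  assumes "1 < x" "x - 1 \<in> gamma_Cl {0<..} B"
  shows "x \<in> gamma_Cl {0<..} B"
proof (rule gamma_Cl_one_step)
  show "[x, x - 1] \<in> admissible {0<..}"
    unfolding admissible_def using assms(1) by (auto intro!: exI[of _ "x - 1"])
qed (use assms in auto)

lemma gamma_Cl_multiplication:
  assumes "0 < x" "0 < n" "\<And>j. j < n \<Longrightarrow> (x + real j) / real n \<in> gamma_Cl {0<..} B"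
  shows "x \<in> gamma_Cl {0<..} B"
proof -
  let ?us = "map (\<lambda>j. (x + real j) / real n) [0..<n]"
  show ?thesis
  proof (cases "x \<in> set ?us")
    \<comment> \<open>possible even for \<open>n \<ge> 2\<close> (e.g. \<open>x = 1\<close>, \<open>n = 2\<close>); then the formula does not isolate \<open>x\<close>,
      but \<open>x\<close> is among the given points\<close>
    case True
    then obtain j where "j < n" "x = (x + real j) / real n"
      by auto
    then show ?thesis
      using assms(3) by metis
  next
    case False
    then have "2 \<le> n"
      using assms(2) by (cases "n = 1") auto
    have "x # ?us \<in> admissible {0<..}"
      unfolding admissible_def
    proof (intro CollectI conjI disjI2)
      show "set (x # ?us) \<subseteq> {0<..}"
        using assms(1,2) by auto
      show "\<exists>z m. 2 \<le> m \<and> x # ?us = z # map (\<lambda>j. (z + real j) / real m) [0..<m]"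
        using \<open>2 \<le> n\<close> by (intro exI[of _ x] exI[of _ n]) simp
    qed
    moreover have "count_list (x # ?us) x = 1"
      using False by simp
    ultimately show ?thesis
      by (rule gamma_Cl_one_step) (use assms in auto)
  qed
qed

lemma gamma_Cl_eq_if_unit_interval:
  assumes "B \<subseteq> {0<..}" "{0<..1} \<subseteq> gamma_Cl {0<..} B"
  shows "gamma_Cl {0<..} B = {0<..}"
proof
  show "gamma_Cl {0<..} B \<subseteq> {0<..}"
    using gamma_Cl_subset[OF assms(1)] .
  have "x \<in> gamma_Cl {0<..} B" if "0 < x" "x \<le> real m + 1" for x m
    using that
  proof (induction m arbitrary: x)
    case 0
    then show ?case using assms(2) by auto
  next
    case (Suc m)
    then show ?case
      by (cases "x \<le> real m + 1") (auto intro: gamma_Cl_recurrence)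
  qed
  then show "{0<..} \<subseteq> gamma_Cl {0<..} B"
    by (metis greaterThan_iff real_arch_simple subsetI add_increasing2 zero_le_one)
qed

definition grid_nbhd :: "nat \<Rightarrow> real \<Rightarrow> real set" where
  "grid_nbhd N r = {0<..1} \<inter> (\<Union>k\<le>N. {real k / N - r <..< real k / N + r})"

lemma grid_nbhd_subset: "grid_nbhd N r \<subseteq> {0<..}"
  unfolding grid_nbhd_def by auto

lemma mem_grid_nbhd:
  assumes "0 < N" "0 < u" "u \<le> 1" "r \<le> 1 / N" "\<bar>real N * u - of_int m\<bar> < real N * r"
  shows "u \<in> grid_nbhd N r"
proof -
  have "real N * r \<le> 1"
    using assms(1,4) by (simp add: field_simps)
  moreover have "0 < real N * u" "real N * u \<le> real N"
    using assms(1-3) by auto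
  ultimately have "0 \<le> m" "m \<le> int N"
    using assms(5) by linarith+
  then obtain k where k: "m = int k" "k \<le> N"
    by (metis nat_0_le of_nat_le_iff zle_int)
  have "real k / N - r < u \<and> u < real k / N + r"
    using assms(1,5) k by (auto simp: field_simps abs_less_iff)
  then show ?thesis
    unfolding grid_nbhd_def using assms(2,3) k(2) by auto
qed

lemma grid_nbhd_sets: "grid_nbhd N r \<in> sets lebesgue"
  unfolding grid_nbhd_def by (intro sets.Int sets.finite_UN) auto

lemma emeasure_grid_nbhd:
  assumes "0 \<le> r"
  shows "emeasure lebesgue (grid_nbhd N r) \<le> ennreal (real (N + 1) * (2 * r))"
proof -
  let ?I = "\<lambda>k::nat. {real k / N - r <..< real k / N + r}"
  have "emeasure lebesgue (grid_nbhd N r) \<le> emeasure lebesgue (\<Union>k\<le>N. ?I k)"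
    unfolding grid_nbhd_def by (intro emeasure_mono sets.finite_UN) auto
  also have "\<dots> \<le> (\<Sum>k\<le>N. emeasure lebesgue (?I k))"
    by (intro emeasure_subadditive_finite) auto
  also have "\<dots> = (\<Sum>k\<le>N. ennreal (2 * r))"
    using assms by simp
  also have "\<dots> = ennreal (real (N + 1) * (2 * r))"
    using assms by (simp add: ennreal_mult ennreal_of_nat_eq_real_of_nat)
  finally show ?thesis .
qed

lemma unit_interval_subset_gamma_Cl_grid_nbhd:
  fixes Q N :: nat
  assumes "0 < Q" "0 < N" and dvd: "\<And>q. 0 < q \<Longrightarrow> q \<le> Q \<Longrightarrow> q dvd N"
  shows "{0<..1} \<subseteq> gamma_Cl {0<..} (grid_nbhd N (1 / (Q * N)))"
proof
  fix x :: real
  assume x: "x \<in> {0<..1}"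
  define S where "S = grid_nbhd N (1 / (Q * N))"
  obtain k h where kh: "0 < k" "k \<le> int Q" "\<bar>of_int k * x - of_int h\<bar> < 1 / Q"
    using Dirichlet_approx[OF assms(1), of x] by blast
  then have "nat k dvd N"
    by (intro dvd) auto
  then obtain n where Nkn: "N = nat k * n" ..
  with \<open>0 < N\<close> have "0 < n" by simp
  have "(x + real j) / real n \<in> S" if "j < n" for j
  proof (unfold S_def, rule mem_grid_nbhd)
    have "real N * ((x + real j) / real n) = of_int k * x + of_int k * real j"
      using \<open>0 < n\<close> kh(1) by (simp add: Nkn field_simps)
    then show "\<bar>real N * ((x + real j) / real n) - of_int (h + k * int j)\<bar> < real N * (1 / (Q * N))"
      using kh(3) \<open>0 < N\<close> by (simp add: algebra_simps)
    show "(x + real j) / real n \<le> 1"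
      using x that \<open>0 < n\<close> by (simp add: field_simps)
  qed (use x \<open>0 < N\<close> \<open>0 < n\<close> assms(1) in \<open>auto simp: field_simps\<close>)
  then have "x \<in> gamma_Cl {0<..} S"
    using gamma_Cl_multiplication[of x n S] subset_gamma_Cl[of S] x \<open>0 < n\<close> by auto
  then show "x \<in> gamma_Cl {0<..} (grid_nbhd N (1 / (Q * N)))"
    unfolding S_def .
qed

theorem mainTheorem8:
  fixes \<delta> :: real
  assumes "\<delta> > 0"
  shows "\<exists>S. S \<in> sets lebesgue \<and> emeasure lebesgue S < ennreal \<delta> \<and>
             fundamental_set {0<..} S"
proof -
  obtain Q :: nat where Q: "4 / \<delta> < real Q"
    using reals_Archimedean2 by blast
  moreover have "0 < 4 / \<delta>"
    using assms by simp
  ultimately have "0 < real Q"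
    by linarith
  with Q assms have "0 < Q" "4 / Q < \<delta>"
    by (simp_all add: field_simps)
  define N :: nat where "N = fact Q"
  define S where "S = grid_nbhd N (1 / (Q * N))"
  have "0 < N"
    unfolding N_def by simp
  have "emeasure lebesgue S \<le> ennreal (real (N + 1) * (2 * (1 / (Q * N))))"
    unfolding S_def by (rule emeasure_grid_nbhd) simp
  also have "\<dots> \<le> ennreal (4 / Q)"
    using \<open>0 < Q\<close> \<open>0 < N\<close> by (intro ennreal_leI) (simp add: field_simps)
  also have "\<dots> < ennreal \<delta>"
    using \<open>4 / Q < \<delta>\<close> assms by (intro ennreal_lessI)
  finally have "emeasure lebesgue S < ennreal \<delta>" .
  moreover have "fundamental_set {0<..} S"
    unfolding fundamental_set_def S_def
    using grid_nbhd_subset gamma_Cl_eq_if_unit_interval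
      unit_interval_subset_gamma_Cl_grid_nbhd[OF \<open>0 < Q\<close> \<open>0 < N\<close>]
    by (simp add: N_def dvd_fact)
  ultimately show ?thesis
    using grid_nbhd_sets S_def by blast
qed

end
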